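(* There is an absolute constant $C$ such that for all $x,u\in\mathbb R$, \[\sup_{0<t\le1}K_t(x,u)\,\bigl(1-\eta((1+|x|)|x-u|)\bigr)\le C\,e^{R(x)}(1+|x|).\]
   Context: $R(x)=x^2/2$. $K_t(x,u)=\frac{e^{R(x)}}{\sqrt{1-e^{-2t}}}\exp\bigl(-\frac12\frac{(e^{-t}u-x)^2}{1-e^{-2t}}\bigr)$. $\eta\ge0$ is a fixed smooth function on $[0,\infty)$ with $\eta=1$ on $[0,1/2]$ and $\eta=0$ on $[1,\infty)$ (with $0\le\eta\le1$). *)

theory Defs
  imports "HOL-Analysis.Analysis"
begin

definition R :: "real \<Rightarrow> real" where
  "R x = x^2 / 2"

definition K :: "real \<Rightarrow> real \<Rightarrow> real \<Rightarrow> real" where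
  "K t x u = exp (R x) / sqrt (1 - exp (-2*t)) *
      exp (-(1/2) * (exp (-t) * u - x)^2 / (1 - exp (-2*t)))"

definition smooth_on :: "real set \<Rightarrow> (real \<Rightarrow> real) \<Rightarrow> bool" where
  "smooth_on S f \<longleftrightarrow> (\<forall>n. \<forall>x\<in>S. ((deriv ^^ n) f) differentiable (at x))"

text \<open>Admissible cutoff: smooth on [0,inf) (smooth on (0,inf) and continuous at 0 from the right;
  it is constant on [0,1/2] anyway), 0<=eta<=1, eta=1 on [0,1/2], eta=0 on [1,inf).\<close>
definition cutoff :: "(real \<Rightarrow> real) \<Rightarrow> bool" where
  "cutoff \<eta> \<longleftrightarrow> smooth_on {0<..} \<eta> \<and> continuous_on {0..} \<eta> \<and>
     (\<forall>s\<ge>0. 0 \<le> \<eta> s \<and> \<eta> s \<le> 1) \<and>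
     (\<forall>s\<in>{0..1/2}. \<eta> s = 1) \<and> (\<forall>s\<ge>1. \<eta> s = 0)"

end

theory Submission
  imports Defs
begin

text \<open>Write \<open>K t x u = e^{R x} g_t(e^{-t} u - x)\<close> with \<open>g_t\<close> the Gaussian factor and
  \<open>D = 1 + |x|\<close>; the cutoff only matters where \<open>|x - u| > 1/(2D)\<close>. If the mean \<open>e^{-t} u\<close> is
  at distance at least \<open>1/(4D)\<close> from \<open>x\<close>, then \<open>z e^{-z^2/2} \<le> 1\<close> bounds \<open>g_t\<close> by \<open>4D\<close>.
  Otherwise \<open>(1 - e^{-t}) |u| > 1/(4D)\<close> with \<open>|u| \<le> 3D\<close>, which forces \<open>t > 1/(12 D^2)\<close>, so
  the variance \<open>1 - e^{-2t}\<close> exceeds \<open>1/(5D)^2\<close> and \<open>g_t \<le> 5D\<close>.\<close>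

definition gauss_factor :: "real \<Rightarrow> real \<Rightarrow> real" where
  "gauss_factor t a = exp (-(1/2) * a^2 / (1 - exp (-2*t))) / sqrt (1 - exp (-2*t))"

lemma K_eq_exp_R_gauss_factor: "K t x u = exp (R x) * gauss_factor t (exp (-t) * u - x)"
  by (simp add: K_def gauss_factor_def)

lemma mult_exp_neg_half_square_le_one: "z * exp (-(z^2/2)) \<le> (1::real)"
proof (cases "z \<ge> 0")
  case True
  have "z \<le> 1 + z^2/2"
    using sum_squares_ge_zero[of "z-1" 0] by (simp add: power2_eq_square algebra_simps)
  also have "\<dots> \<le> exp (z^2/2)" by (rule exp_ge_add_one_self)
  finally show ?thesis by (simp add: exp_minus field_simps)
next
  case False
  then have "z * exp (-(z^2/2)) \<le> 0" by (simp add: mult_nonpos_nonneg)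
  then show ?thesis by linarith
qed

lemma gaussian_le_inverse_abs:
  fixes a r :: real
  assumes "r > 0" and "a \<noteq> 0"
  shows "exp (-(1/2) * a^2 / r^2) / r \<le> 1 / \<bar>a\<bar>"
proof -
  have "\<bar>a\<bar> / r * exp (-((\<bar>a\<bar> / r)^2 / 2)) \<le> 1"
    by (rule mult_exp_neg_half_square_le_one)
  then show ?thesis
    using assms by (simp add: power_divide field_simps)
qed

lemma one_minus_exp_neg_ge:
  fixes s :: real
  assumes "s \<ge> 0"
  shows "s / (1 + s) \<le> 1 - exp (-s)"
proof -
  have "exp (-s) \<le> 1 / (1 + s)"
    using exp_ge_add_one_self[of s] assms by (simp add: exp_minus divide_simps)
  then show ?thesis
    using assms by (simp add: field_simps)
qed

lemma gauss_factor_le_far: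
  assumes "t > 0" and "c > 0" and "\<bar>a\<bar> \<ge> c"
  shows "gauss_factor t a \<le> 1 / c"
proof -
  define r where "r = sqrt (1 - exp (-2*t))"
  have "r > 0" using assms(1) by (simp add: r_def)
  moreover have "r^2 = 1 - exp (-2*t)" using assms(1) by (simp add: r_def)
  ultimately have "gauss_factor t a \<le> 1 / \<bar>a\<bar>"
    using gaussian_le_inverse_abs[of r a] assms by (simp add: gauss_factor_def r_def)
  also have "\<dots> \<le> 1 / c" using assms by (simp add: frac_le)
  finally show ?thesis .
qed

lemma gauss_factor_le_inverse_sqrt:
  assumes "t > 0"
  shows "gauss_factor t a \<le> 1 / sqrt (1 - exp (-2*t))"
  using assms by (simp add: gauss_factor_def divide_right_mono)

lemma time_lower_bound_near_mean:
  fixes t x u :: real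
  defines "D \<equiv> 1 + \<bar>x\<bar>"
  assumes "0 < t" "t \<le> 1"
    and far: "\<bar>x - u\<bar> > 1 / (2*D)"
    and near: "\<bar>exp (-t) * u - x\<bar> < 1 / (4*D)"
  shows "t > 1 / (12 * D^2)"
proof -
  define a where "a = exp (-t) * u - x"
  have D1: "D \<ge> 1" by (simp add: D_def)
  have "1 / (4*D) \<le> 1/4" using D1 by (simp add: frac_le)
  then have "\<bar>a\<bar> < 1/4" using near by (simp add: a_def)
  moreover have "exp (-t) * \<bar>u\<bar> = \<bar>a + x\<bar>" by (simp add: a_def abs_mult)
  ultimately have "exp (-t) * \<bar>u\<bar> \<le> D"
    using abs_triangle_ineq[of a x] by (simp add: D_def)
  moreover have "exp t \<le> 3"
    using \<open>t \<le> 1\<close> exp_le exp_le_cancel_iff[of t 1] by linarith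
  ultimately have u3: "\<bar>u\<bar> \<le> 3 * D"
    using mult_mono[of "exp t" 3 "exp (-t) * \<bar>u\<bar>" D] by (simp add: exp_minus_inverse mult.assoc[symmetric])
  have "x - u = -a - (1 - exp (-t)) * u" by (simp add: a_def algebra_simps)
  then have "\<bar>x - u\<bar> \<le> \<bar>-a\<bar> + \<bar>(1 - exp (-t)) * u\<bar>"
    by (metis abs_triangle_ineq4)
  also have "\<dots> = \<bar>a\<bar> + (1 - exp (-t)) * \<bar>u\<bar>"
    using \<open>0 < t\<close> by (simp add: abs_mult)
  finally have "\<bar>x - u\<bar> \<le> \<bar>a\<bar> + (1 - exp (-t)) * \<bar>u\<bar>" .
  moreover have "1 / (2*D) = 1 / (4*D) + 1 / (4*D)" by simp
  ultimately have "1 / (4*D) < (1 - exp (-t)) * \<bar>u\<bar>"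
    using far near unfolding a_def by linarith
  also have "\<dots> \<le> t * (3*D)"
    using exp_ge_add_one_self[of "-t"] u3 \<open>0 < t\<close> by (intro mult_mono) auto
  finally show ?thesis
    using D1 by (simp add: power2_eq_square field_simps)
qed

lemma gauss_factor_le_near:
  assumes "0 < t" "t \<le> 1" and "D \<ge> 1" and "t > 1 / (12 * D^2)"
  shows "gauss_factor t a \<le> 5 * D"
proof -
  have "(1 / (5*D))^2 \<le> 2*t / 3"
    using assms by (simp add: power2_eq_square field_simps)
  also have "\<dots> \<le> 2*t / (1 + 2*t)"
    using assms by (intro divide_left_mono) auto
  also have "\<dots> \<le> 1 - exp (-2*t)"
    using one_minus_exp_neg_ge[of "2*t"] assms by simp
  finally have "1 / (5*D) \<le> sqrt (1 - exp (-2*t))"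
    using assms real_sqrt_le_mono by fastforce
  then have "1 / sqrt (1 - exp (-2*t)) \<le> 5 * D"
    using assms by (simp add: field_simps)
  with gauss_factor_le_inverse_sqrt[OF \<open>0 < t\<close>, of a] show ?thesis by linarith
qed

lemma gauss_factor_bound_off_diagonal:
  fixes t x u :: real
  assumes "0 < t" "t \<le> 1" and "(1 + \<bar>x\<bar>) * \<bar>x - u\<bar> > 1/2"
  shows "gauss_factor t (exp (-t) * u - x) \<le> 5 * (1 + \<bar>x\<bar>)"
proof (cases "\<bar>exp (-t) * u - x\<bar> \<ge> 1 / (4 * (1 + \<bar>x\<bar>))")
  case True
  then have "gauss_factor t (exp (-t) * u - x) \<le> 4 * (1 + \<bar>x\<bar>)"
    using gauss_factor_le_far[OF \<open>0 < t\<close>, of "1 / (4 * (1 + \<bar>x\<bar>))"] by simp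
  then show ?thesis by simp
next
  case False
  have "\<bar>x - u\<bar> > 1 / (2 * (1 + \<bar>x\<bar>))"
    using assms(3) by (simp add: field_simps)
  with False assms have "t > 1 / (12 * (1 + \<bar>x\<bar>)^2)"
    by (intro time_lower_bound_near_mean) auto
  with assms show ?thesis by (intro gauss_factor_le_near) auto
qed

theorem mainTheorem8:
  fixes \<eta> :: "real \<Rightarrow> real"
  assumes "cutoff \<eta>"
  shows "\<exists>C. \<forall>x u. \<forall>t\<in>{0<..1}.
           K t x u * (1 - \<eta> ((1 + \<bar>x\<bar>) * \<bar>x - u\<bar>)) \<le> C * exp (R x) * (1 + \<bar>x\<bar>)"
proof (intro exI allI ballI)
  fix x u t :: real
  assume t: "t \<in> {0<..1}"
  define w where "w = (1 + \<bar>x\<bar>) * \<bar>x - u\<bar>"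
  have "w \<ge> 0" by (simp add: w_def)
  then have \<eta>: "0 \<le> \<eta> w" "\<eta> w \<le> 1" "w \<le> 1/2 \<Longrightarrow> \<eta> w = 1"
    using assms by (auto simp: cutoff_def)
  have "K t x u \<ge> 0" using t by (simp add: K_def)
  show "K t x u * (1 - \<eta> ((1 + \<bar>x\<bar>) * \<bar>x - u\<bar>)) \<le> 5 * exp (R x) * (1 + \<bar>x\<bar>)"
  proof (cases "w \<le> 1/2")
    case True
    then show ?thesis using \<eta> by (simp add: w_def)
  next
    case False
    then have "K t x u \<le> exp (R x) * (5 * (1 + \<bar>x\<bar>))"
      using t gauss_factor_bound_off_diagonal[of t x u]
      by (simp add: K_eq_exp_R_gauss_factor w_def)
    moreover have "K t x u * (1 - \<eta> w) \<le> K t x u"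
      using \<open>K t x u \<ge> 0\<close> \<eta> by (simp add: mult_left_le)
    ultimately show ?thesis by (simp add: w_def algebra_simps)
  qed
qed

end
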